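(* There is a satisfiability-preserving reduction from $\mathsf{C\text{-}RASP}$ to $\mathsf{C\text{-}RASP}$ with depth at most 2: there is a computable transformation mapping each $\mathsf{C\text{-}RASP}$ formula $\varphi$ to a $\mathsf{C\text{-}RASP}$ formula $\varphi'$ of depth at most $2$ (possibly over an alphabet extended by fresh propositions) such that $\varphi$ is satisfiable iff $\varphi'$ is satisfiable.
   Context: $\mathsf{C\text{-}RASP}$ formulas over a finite alphabet $\Sigma$: $\phi ::= \sigma \mid \Diamond^{-}\phi \mid \Box^{-}\phi \mid \neg\phi \mid \phi_1\wedge\phi_2 \mid \sum_{t\in\mathcal{T}}\alpha_t t\sim k$, terms $t ::= \#[\phi] \mid c$, with $\alpha_t,k,c\in\mathbb{Z}$, ${\sim}\in\{<,\le,=,\ge,>\}$. At position $i$ of $w$: $w,i\models\sigma$ iff $w_i=\sigma$; $w,i\models\Diamond^{-}\phi$ iff $w,j\models\phi$ for some $j<i$; $w,i\models\Box^{-}\phi$ iff $w,j\models\phi$ for all $j\le i$; $\#[\phi]$ evaluates to $|\{j\in[1,i]: w,j\models\phi\}|$; comparisons are integer comparisons. $w\models\phi$ iff $w,|w|\models\phi$; $\phi$ is satisfiable iff some string satisfies it. Depth: $\mathrm{dp}(\sigma)=\mathrm{dp}(c)=0$, $\neg$ preserves depth, $\wedge$ takes the maximum, $\mathrm{dp}(\#[\phi])=\mathrm{dp}(\Diamond^{-}\phi)=\mathrm{dp}(\Box^{-}\phi)=\mathrm{dp}(\phi)+1$, and a comparison has the maximal depth of its terms. *)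

theory Defs
  imports Main "HOL-Library.Nat_Bijection"
begin

datatype cmp = Lt | Le | Eq | Ge | Gt

datatype cform =
    Sym nat
  | Dia cform
  | Box cform
  | Neg cform
  | Conj cform cform
  | Cmp "(int \<times> cterm) list" cmp int
and cterm =
    Cnt cform
  | Const int

fun cmp_sem :: "cmp \<Rightarrow> int \<Rightarrow> int \<Rightarrow> bool" where
  "cmp_sem Lt a b = (a < b)"
| "cmp_sem Le a b = (a \<le> b)"
| "cmp_sem Eq a b = (a = b)"
| "cmp_sem Ge a b = (a \<ge> b)"
| "cmp_sem Gt a b = (a > b)"

section \<open>Semantics (positions are 1-based)\<close>

fun holds :: "nat list \<Rightarrow> nat \<Rightarrow> cform \<Rightarrow> bool"
and tval :: "nat list \<Rightarrow> nat \<Rightarrow> cterm \<Rightarrow> int" where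
  "holds w i (Sym a) = (w ! (i - 1) = a)"
| "holds w i (Dia \<phi>) = (\<exists>j\<in>{1..<i}. holds w j \<phi>)"
| "holds w i (Box \<phi>) = (\<forall>j\<in>{1..i}. holds w j \<phi>)"
| "holds w i (Neg \<phi>) = (\<not> holds w i \<phi>)"
| "holds w i (Conj \<phi> \<psi>) = (holds w i \<phi> \<and> holds w i \<psi>)"
| "holds w i (Cmp ts c k) =
     cmp_sem c (sum_list (map (\<lambda>p. fst p * tval w i (snd p)) ts)) k"
| "tval w i (Cnt \<phi>) = int (card {j\<in>{1..i}. holds w j \<phi>})"
| "tval w i (Const c) = c"

definition models :: "nat list \<Rightarrow> cform \<Rightarrow> bool" where
  "models w \<phi> = holds w (length w) \<phi>"

definition satisfiable :: "nat set \<Rightarrow> cform \<Rightarrow> bool" where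
  "satisfiable \<Sigma> \<phi> = (\<exists>w. w \<noteq> [] \<and> set w \<subseteq> \<Sigma> \<and> models w \<phi>)"

fun letters :: "cform \<Rightarrow> nat set"
and tletters :: "cterm \<Rightarrow> nat set" where
  "letters (Sym a) = {a}"
| "letters (Dia \<phi>) = letters \<phi>"
| "letters (Box \<phi>) = letters \<phi>"
| "letters (Neg \<phi>) = letters \<phi>"
| "letters (Conj \<phi> \<psi>) = letters \<phi> \<union> letters \<psi>"
| "letters (Cmp ts c k) = (\<Union>p\<in>set ts. tletters (snd p))"
| "tletters (Cnt \<phi>) = letters \<phi>"
| "tletters (Const c) = {}"

fun dp :: "cform \<Rightarrow> nat"
and tdp :: "cterm \<Rightarrow> nat" where
  "dp (Sym a) = 0"
| "dp (Dia \<phi>) = Suc (dp \<phi>)"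
| "dp (Box \<phi>) = Suc (dp \<phi>)"
| "dp (Neg \<phi>) = dp \<phi>"
| "dp (Conj \<phi> \<psi>) = max (dp \<phi>) (dp \<psi>)"
| "dp (Cmp ts c k) = fold max (map (\<lambda>p. tdp (snd p)) ts) 0"
| "tdp (Cnt \<phi>) = Suc (dp \<phi>)"
| "tdp (Const c) = 0"

fun cmp_code :: "cmp \<Rightarrow> nat" where
  "cmp_code Lt = 0" | "cmp_code Le = 1" | "cmp_code Eq = 2" | "cmp_code Ge = 3" | "cmp_code Gt = 4"

fun enc :: "cform \<Rightarrow> nat"
and tenc :: "cterm \<Rightarrow> nat" where
  "enc (Sym a) = prod_encode (0, a)"
| "enc (Dia \<phi>) = prod_encode (1, enc \<phi>)"
| "enc (Box \<phi>) = prod_encode (2, enc \<phi>)"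
| "enc (Neg \<phi>) = prod_encode (3, enc \<phi>)"
| "enc (Conj \<phi> \<psi>) = prod_encode (4, prod_encode (enc \<phi>, enc \<psi>))"
| "enc (Cmp ts c k) = prod_encode (5, prod_encode
     (list_encode (map (\<lambda>p. prod_encode (int_encode (fst p), tenc (snd p))) ts),
      prod_encode (cmp_code c, int_encode k)))"
| "tenc (Cnt \<phi>) = prod_encode (0, enc \<phi>)"
| "tenc (Const c) = prod_encode (1, int_encode c)"

definition enc_inst :: "nat set \<Rightarrow> cform \<Rightarrow> nat" where
  "enc_inst \<Sigma> \<phi> = prod_encode (set_encode \<Sigma>, enc \<phi>)"

datatype recf = Zf | Sf | Proj nat | Comp recf "recf list" | PrimRec recf recf | Mu recf

inductive reval :: "recf \<Rightarrow> nat list \<Rightarrow> nat \<Rightarrow> bool" where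
  zero: "reval Zf xs 0"
| succ: "reval Sf (x # xs) (Suc x)"
| proj: "i < length xs \<Longrightarrow> reval (Proj i) xs (xs ! i)"
| comp: "length ys = length gs \<Longrightarrow> (\<forall>i<length gs. reval (gs ! i) xs (ys ! i))
           \<Longrightarrow> reval f ys z \<Longrightarrow> reval (Comp f gs) xs z"
| pr0: "reval f xs y \<Longrightarrow> reval (PrimRec f g) (0 # xs) y"
| prS: "reval (PrimRec f g) (n # xs) y \<Longrightarrow> reval g (n # y # xs) z
           \<Longrightarrow> reval (PrimRec f g) (Suc n # xs) z"
| mu: "reval f (n # xs) 0 \<Longrightarrow> (\<forall>m<n. \<exists>y. y > 0 \<and> reval f (m # xs) y)
           \<Longrightarrow> reval (Mu f) xs n"

end

theory Submission
  imports Defs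
begin

text \<open>Every natural number decodes to a formula, and the codes of the immediate subformulas of
  a formula are smaller than its own code. Let \<open>e\<close> be the code of \<open>\<phi>\<close> and \<open>s\<close> the code
  of \<open>\<Sigma>\<close>. Annotate every position of a string over \<open>\<Sigma>\<close> with the set of codes
  \<open>y \<le> e\<close> whose formulas hold there, packing letter and annotation into one letter
  below \<open>Suc s * 2 ^ Suc e\<close>. The new formula states that at every position the letter
  projects into \<open>\<Sigma>\<close> and, for each \<open>y \<le> e\<close>, that \<open>y\<close> is in the annotation iff the
  formula obtained by decoding the outermost layer of \<open>y\<close> holds, where its immediate
  subformulas are replaced by tests on the annotation; and that \<open>e\<close> is in the annotation
  at the last position. The tests have depth 0, so a decoded layer has depth at most 1 and the
  whole formula depth at most 2. By induction on codes these constraints force the annotations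
  to be the true ones, which gives both directions of the equivalence. The translation only
  uses loops bounded by the input, so it is primitive recursive.\<close>

section \<open>Computable functions\<close>

definition computable :: "nat \<Rightarrow> (nat list \<Rightarrow> nat) \<Rightarrow> bool" where
  "computable n f \<longleftrightarrow> (\<exists>r. \<forall>xs. length xs = n \<longrightarrow> reval r xs (f xs))"

definition decidable :: "nat \<Rightarrow> (nat list \<Rightarrow> bool) \<Rightarrow> bool" where
  "decidable n P \<longleftrightarrow> computable n (\<lambda>xs. of_bool (P xs))"

lemma computable_cong:
  "computable n f \<Longrightarrow> (\<And>xs. length xs = n \<Longrightarrow> f xs = g xs) \<Longrightarrow> computable n g"
  unfolding computable_def by metis

lemma computable_zero: "computable n (\<lambda>_. 0)"
  unfolding computable_def by (auto intro: reval.zero)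

lemma computable_nth: "i < n \<Longrightarrow> computable n (\<lambda>xs. xs ! i)"
  unfolding computable_def by (auto intro: reval.proj)

lemma computable_drop_nth: "m + i < n \<Longrightarrow> computable n (\<lambda>xs. drop m xs ! i)"
  by (rule computable_cong[OF computable_nth[of "m + i" n]]) auto

lemma computable_comp:
  assumes h: "computable k h" and len: "length gs = k" and gs: "\<forall>g\<in>set gs. computable n g"
  shows "computable n (\<lambda>xs. h (map (\<lambda>g. g xs) gs))"
proof -
  obtain rh where rh: "\<forall>ys. length ys = k \<longrightarrow> reval rh ys (h ys)"
    using h unfolding computable_def by blast
  have "\<forall>i<length gs. \<exists>r. \<forall>xs. length xs = n \<longrightarrow> reval r xs ((gs ! i) xs)"
    using gs unfolding computable_def by auto
  then obtain rg where rg: "\<forall>i<length gs. \<forall>xs. length xs = n \<longrightarrow> reval (rg i) xs ((gs ! i) xs)"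
    by metis
  show ?thesis unfolding computable_def
  proof (intro exI allI impI)
    fix xs :: "nat list" assume "length xs = n"
    then show "reval (Comp rh (map rg [0..<length gs])) xs (h (map (\<lambda>g. g xs) gs))"
      using rg rh len by (intro reval.comp[where ys = "map (\<lambda>g. g xs) gs"]) auto
  qed
qed

lemma computable_comp1:
  "computable 1 (\<lambda>ys. h (ys ! 0)) \<Longrightarrow> computable n a \<Longrightarrow> computable n (\<lambda>xs. h (a xs))"
  using computable_comp[of 1 "\<lambda>ys. h (ys ! 0)" "[a]"] by simp

lemma computable_comp2:
  "computable 2 (\<lambda>ys. h (ys ! 0) (ys ! 1)) \<Longrightarrow> computable n a \<Longrightarrow> computable n b \<Longrightarrow>
   computable n (\<lambda>xs. h (a xs) (b xs))"
  using computable_comp[of 2 "\<lambda>ys. h (ys ! 0) (ys ! 1)" "[a, b]"] by simp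

lemma computable_comp3:
  "computable 3 (\<lambda>ys. h (ys ! 0) (ys ! 1) (ys ! 2)) \<Longrightarrow>
   computable n a \<Longrightarrow> computable n b \<Longrightarrow> computable n c \<Longrightarrow>
   computable n (\<lambda>xs. h (a xs) (b xs) (c xs))"
  using computable_comp[of 3 "\<lambda>ys. h (ys ! 0) (ys ! 1) (ys ! 2)" "[a, b, c]"] by simp

lemma computable_Suc: "computable n a \<Longrightarrow> computable n (\<lambda>xs. Suc (a xs))"
proof (erule computable_comp1[where h = Suc, rotated])
  show "computable 1 (\<lambda>ys. Suc (ys ! 0))" unfolding computable_def
  proof (intro exI allI impI)
    fix ys :: "nat list" assume "length ys = 1"
    then obtain y where "ys = [y]" by (cases ys) auto
    then show "reval Sf ys (Suc (ys ! 0))" by (auto intro: reval.succ)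
  qed
qed

lemma computable_const: "computable n (\<lambda>_. c)"
  by (induction c) (auto intro: computable_zero computable_Suc)

lemma computable_PrimRec:
  assumes f: "computable n f" and g: "computable (Suc (Suc n)) g"
  shows "computable (Suc n) (\<lambda>xs. rec_nat (f (tl xs)) (\<lambda>i acc. g (i # acc # tl xs)) (hd xs))"
proof -
  obtain rf where rf: "\<forall>ys. length ys = n \<longrightarrow> reval rf ys (f ys)"
    using f unfolding computable_def by blast
  obtain rg where rg: "\<forall>ys. length ys = Suc (Suc n) \<longrightarrow> reval rg ys (g ys)"
    using g unfolding computable_def by blast
  have run: "reval (PrimRec rf rg) (k # ys) (rec_nat (f ys) (\<lambda>i acc. g (i # acc # ys)) k)"
    if "length ys = n" for k ys
  proof (induction k)
    case 0
    show ?case using that rf by (auto intro: reval.pr0)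
  next
    case (Suc k)
    show ?case using that rg by (auto intro: reval.prS[OF Suc.IH])
  qed
  show ?thesis unfolding computable_def
  proof (intro exI allI impI)
    fix xs :: "nat list" assume "length xs = Suc n"
    then obtain k ys where "xs = k # ys" "length ys = n" by (cases xs) auto
    then show "reval (PrimRec rf rg) xs (rec_nat (f (tl xs)) (\<lambda>i acc. g (i # acc # tl xs)) (hd xs))"
      using run by simp
  qed
qed

lemma computable_rec_nat:
  assumes f: "computable n f" and k: "computable n k"
    and g: "computable (Suc (Suc n)) (\<lambda>ys. G (ys ! 0) (ys ! 1) (drop 2 ys))"
  shows "computable n (\<lambda>xs. rec_nat (f xs) (\<lambda>i acc. G i acc xs) (k xs))"
proof -
  let ?R = "\<lambda>ys. rec_nat (f (tl ys)) (\<lambda>i acc. G i acc (tl ys)) (hd ys)"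
  have "computable (Suc n) ?R"
    using computable_PrimRec[OF f g] by simp
  moreover have "\<forall>g\<in>set (k # map (\<lambda>i xs. xs ! i) [0..<n]). computable n g"
    using k by (auto intro: computable_nth)
  ultimately have "computable n (\<lambda>xs. ?R (map (\<lambda>g. g xs) (k # map (\<lambda>i xs. xs ! i) [0..<n])))"
    by (intro computable_comp) auto
  then show ?thesis
  proof (rule computable_cong)
    fix xs :: "nat list" assume "length xs = n"
    then have "map (\<lambda>i. xs ! i) [0..<n] = xs" using map_nth[of xs] by simp
    then show "?R (map (\<lambda>g. g xs) (k # map (\<lambda>i xs. xs ! i) [0..<n])) =
        rec_nat (f xs) (\<lambda>i acc. G i acc xs) (k xs)"
      by (simp add: comp_def)
  qed
qed

lemmas computable_basic = computable_nth computable_drop_nth computable_const computable_Suc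

lemma computable_add:
  assumes "computable n a" "computable n b" shows "computable n (\<lambda>xs. a xs + b xs)"
proof (rule computable_comp2[OF _ assms])
  have "rec_nat y (\<lambda>_ acc. Suc acc) x = x + y" for x y :: nat by (induction x) auto
  moreover have "computable 2 (\<lambda>ys. rec_nat (ys ! 1) (\<lambda>_ acc. Suc acc) (ys ! 0))"
    by (rule computable_rec_nat; intro computable_basic; simp)
  ultimately show "computable 2 (\<lambda>ys. ys ! 0 + ys ! 1)" by simp
qed

lemma computable_pred: "computable n a \<Longrightarrow> computable n (\<lambda>xs. a xs - 1)"
proof (erule computable_comp1[where h = "\<lambda>x. x - 1", rotated])
  have "rec_nat 0 (\<lambda>i _. i) x = x - 1" for x :: nat by (induction x) auto
  moreover have "computable 1 (\<lambda>ys. rec_nat 0 (\<lambda>i _. i) (ys ! 0))"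
    by (rule computable_rec_nat; intro computable_basic; simp)
  ultimately show "computable 1 (\<lambda>ys. ys ! 0 - 1)" by simp
qed

lemma computable_diff:
  assumes "computable n a" "computable n b" shows "computable n (\<lambda>xs. a xs - b xs)"
proof (rule computable_comp2[OF _ assms])
  have "rec_nat x (\<lambda>_ acc. acc - 1) y = x - y" for x y :: nat by (induction y) auto
  moreover have "computable 2 (\<lambda>ys. rec_nat (ys ! 0) (\<lambda>_ acc. acc - 1) (ys ! 1))"
    by (rule computable_rec_nat; intro computable_basic computable_pred; simp)
  ultimately show "computable 2 (\<lambda>ys. ys ! 0 - ys ! 1)" by simp
qed

lemma computable_mult:
  assumes "computable n a" "computable n b" shows "computable n (\<lambda>xs. a xs * b xs)"
proof (rule computable_comp2[OF _ assms])
  have "rec_nat 0 (\<lambda>_ acc. acc + x) y = x * y" for x y :: nat by (induction y) auto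
  moreover have "computable 2 (\<lambda>ys. rec_nat 0 (\<lambda>_ acc. acc + ys ! 0) (ys ! 1))"
    by (rule computable_rec_nat; intro computable_basic computable_add; simp)
  ultimately show "computable 2 (\<lambda>ys. ys ! 0 * ys ! 1)" by simp
qed

lemma computable_power2: "computable n a \<Longrightarrow> computable n (\<lambda>xs. 2 ^ a xs)"
proof (erule computable_comp1[where h = "\<lambda>x. 2 ^ x", rotated])
  have "rec_nat 1 (\<lambda>_ acc. acc + acc) x = (2::nat) ^ x" for x by (induction x) auto
  moreover have "computable 1 (\<lambda>ys. rec_nat 1 (\<lambda>_ acc. acc + acc) (ys ! 0))"
    by (rule computable_rec_nat; intro computable_basic computable_add; simp)
  ultimately show "computable 1 (\<lambda>ys. 2 ^ (ys ! 0))" by simp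
qed

lemma computable_if:
  assumes "decidable n P" "computable n a" "computable n b"
  shows "computable n (\<lambda>xs. if P xs then a xs else b xs)"
proof -
  have "computable 3 (\<lambda>ys. rec_nat (ys ! 1) (\<lambda>_ _. ys ! 2) (ys ! 0))"
    by (rule computable_rec_nat; intro computable_basic; simp)
  then have "computable n (\<lambda>xs. rec_nat (b xs) (\<lambda>_ _. a xs) (of_bool (P xs)))"
    using assms(1,3,2) unfolding decidable_def
    by (rule computable_comp3[where h = "\<lambda>c y z. rec_nat y (\<lambda>_ _. z) c"])
  then show ?thesis by (rule computable_cong) simp
qed

lemma decidableI:
  "computable n f \<Longrightarrow> (\<And>xs. length xs = n \<Longrightarrow> f xs = of_bool (P xs)) \<Longrightarrow> decidable n P"
  unfolding decidable_def by (rule computable_cong)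

lemma decidable_le:
  assumes "computable n a" "computable n b" shows "decidable n (\<lambda>xs. a xs \<le> b xs)"
  by (rule decidableI[where f = "\<lambda>xs. 1 - (a xs - b xs)"])
    (intro computable_diff computable_const assms, simp)

lemma decidable_eq:
  assumes "computable n a" "computable n b" shows "decidable n (\<lambda>xs. a xs = b xs)"
  by (rule decidableI[where f = "\<lambda>xs. 1 - ((a xs - b xs) + (b xs - a xs))"])
    (intro computable_diff computable_add computable_const assms, simp)

lemma computable_div:
  assumes "computable n a" "computable n b" shows "computable n (\<lambda>xs. a xs div b xs)"
proof (rule computable_comp2[OF _ assms])
  have div_loop: "x div y =
      (if y = 0 then 0 else rec_nat 0 (\<lambda>i acc. if Suc i * y \<le> x then Suc acc else acc) x)"
    for x y :: nat
  proof (cases "y = 0")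
    case False
    have "rec_nat 0 (\<lambda>i acc. if Suc i * y \<le> x then Suc acc else acc) k = min k (x div y)" for k
    proof (induction k)
      case (Suc k)
      have "Suc k * y \<le> x \<longleftrightarrow> Suc k \<le> x div y"
        using False by (simp add: less_eq_div_iff_mult_less_eq)
      then show ?case using Suc by auto
    qed simp
    then show ?thesis using False by (simp add: div_le_dividend)
  qed simp
  show "computable 2 (\<lambda>ys. ys ! 0 div ys ! 1)"
    by (subst div_loop)
      (intro computable_if decidable_eq decidable_le computable_rec_nat computable_mult
        computable_basic; simp)
qed

lemma computable_mod:
  assumes "computable n a" "computable n b" shows "computable n (\<lambda>xs. a xs mod b xs)"
  by (rule computable_cong[where f = "\<lambda>xs. a xs - b xs * (a xs div b xs)"])
    (intro computable_diff computable_mult computable_div assms, simp add: minus_mult_div_eq_mod)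

lemma decidable_odd: "computable n a \<Longrightarrow> decidable n (\<lambda>xs. odd (a xs))"
  by (rule decidableI[where f = "\<lambda>xs. a xs mod 2"])
    (intro computable_mod computable_const, auto simp: odd_iff_mod_2_eq_one)

definition pfst :: "nat \<Rightarrow> nat" where "pfst z = fst (prod_decode z)"
definition psnd :: "nat \<Rightarrow> nat" where "psnd z = snd (prod_decode z)"

lemma pfst_prod_encode [simp]: "pfst (prod_encode (a, b)) = a"
  and psnd_prod_encode [simp]: "psnd (prod_encode (a, b)) = b"
  by (simp_all add: pfst_def psnd_def)

lemma prod_encode_pfst_psnd [simp]: "prod_encode (pfst z, psnd z) = z"
  by (simp add: pfst_def psnd_def)

lemma le_triangle: "n \<le> triangle n"
  by (induction n) auto

lemma triangle_mono: "i \<le> j \<Longrightarrow> triangle i \<le> triangle j"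
  by (induction j rule: dec_induct) auto

lemma prod_encode_unfold: "z = triangle (pfst z + psnd z) + pfst z"
  using prod_encode_pfst_psnd[of z] unfolding prod_encode_def by simp

lemma pfst_le: "pfst z \<le> z" and psnd_le: "psnd z \<le> z"
  using prod_encode_unfold[of z] le_triangle[of "pfst z + psnd z"] by linarith+

lemma psnd_less: "pfst z \<noteq> 0 \<Longrightarrow> psnd z < z"
  using prod_encode_unfold[of z] le_triangle[of "pfst z + psnd z"] by linarith

lemma computable_triangle: "computable n a \<Longrightarrow> computable n (\<lambda>xs. triangle (a xs))"
  unfolding triangle_def by (intro computable_div computable_mult computable_Suc computable_const)

lemma computable_prod_encode:
  "computable n a \<Longrightarrow> computable n b \<Longrightarrow> computable n (\<lambda>xs. prod_encode (a xs, b xs))"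
  unfolding prod_encode_def by (simp, intro computable_add computable_triangle)

text \<open>The diagonal \<open>pfst z + psnd z\<close> of \<open>z\<close> is the number of \<open>i < z\<close> with
  \<open>triangle (Suc i) \<le> z\<close>, which a bounded loop can count.\<close>

lemma count_diagonal:
  "rec_nat 0 (\<lambda>i acc. if triangle (Suc i) \<le> z then Suc acc else acc) z = pfst z + psnd z"
proof -
  define d where "d = pfst z + psnd z"
  have z: "z = triangle d + pfst z" and "pfst z \<le> d"
    using prod_encode_unfold[of z] unfolding d_def by simp_all
  have "triangle (Suc i) \<le> z \<longleftrightarrow> i < d" for i
  proof
    assume "triangle (Suc i) \<le> z"
    then have "triangle (Suc i) < triangle (Suc d)" using z \<open>pfst z \<le> d\<close> by simp
    then show "i < d" using triangle_mono[of "Suc d" "Suc i"] by linarith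
  next
    assume "i < d"
    then show "triangle (Suc i) \<le> z" using triangle_mono[of "Suc i" d] z by simp
  qed
  then have "rec_nat 0 (\<lambda>i acc. if triangle (Suc i) \<le> z then Suc acc else acc) k = min k d" for k
    by (induction k) (auto simp del: triangle_Suc)
  moreover have "d \<le> z" using le_triangle[of d] z by simp
  ultimately show ?thesis unfolding d_def by simp
qed

lemma computable_pfst: "computable n a \<Longrightarrow> computable n (\<lambda>xs. pfst (a xs))"
  and computable_psnd: "computable n a \<Longrightarrow> computable n (\<lambda>xs. psnd (a xs))"
proof -
  let ?d = "\<lambda>z. rec_nat 0 (\<lambda>i acc. if triangle (Suc i) \<le> z then Suc acc else acc) z"
  have d: "computable 1 (\<lambda>ys. ?d (ys ! 0))"
    by (intro computable_rec_nat computable_if decidable_le computable_triangle computable_basic;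
        simp)
  have pfst: "pfst z = z - triangle (?d z)" and psnd: "psnd z = ?d z - (z - triangle (?d z))" for z
    using prod_encode_unfold[of z] unfolding count_diagonal by simp_all
  assume a: "computable n a"
  show "computable n (\<lambda>xs. pfst (a xs))" "computable n (\<lambda>xs. psnd (a xs))"
    unfolding pfst psnd by (intro computable_diff computable_triangle computable_comp1[OF d] a)+
qed

lemmas computable_intros =
  computable_basic computable_add computable_diff computable_mult computable_div computable_mod
  computable_power2 computable_if decidable_eq decidable_le decidable_odd
  computable_prod_encode computable_pfst computable_psnd

text \<open>\<open>map_step h\<close> moves the head of \<open>xs\<close>, transformed by \<open>h\<close>, from the state
  \<open>prod_encode (list_encode xs, list_encode ys)\<close> onto \<open>ys\<close>. This reverses the list, so
  \<open>map_code\<close> runs it a second time with the identity.\<close>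

definition map_step :: "(nat \<Rightarrow> nat) \<Rightarrow> nat \<Rightarrow> nat" where
  "map_step h st = (if pfst st = 0 then st
     else prod_encode (psnd (pfst st - 1), Suc (prod_encode (h (pfst (pfst st - 1)), psnd st))))"

definition map_code :: "(nat \<Rightarrow> nat) \<Rightarrow> nat \<Rightarrow> nat" where
  "map_code h L = psnd (rec_nat (prod_encode (psnd (rec_nat (prod_encode (L, 0))
      (\<lambda>_. map_step h) L), 0)) (\<lambda>_. map_step (\<lambda>z. z)) L)"

lemma rec_nat_funpow: "rec_nat z (\<lambda>_. f) k = (f ^^ k) z"
  by (induction k) auto

lemma map_step_funpow:
  "length xs \<le> k \<Longrightarrow> (map_step h ^^ k) (prod_encode (list_encode xs, list_encode ys)) =
     prod_encode (0, list_encode (rev (map h xs) @ ys))"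
proof (induction xs arbitrary: ys k)
  case Nil
  have "(map_step h ^^ k) (prod_encode (0, list_encode ys)) = prod_encode (0, list_encode ys)" for k
    by (induction k) (simp_all add: map_step_def)
  then show ?case by simp
next
  case (Cons x xs)
  then obtain k' where "k = Suc k'" "length xs \<le> k'" by (cases k) auto
  moreover have "map_step h (prod_encode (list_encode (x # xs), list_encode ys)) =
      prod_encode (list_encode xs, list_encode (h x # ys))"
    by (simp add: map_step_def)
  ultimately show ?case
    using Cons.IH[of k' "h x # ys"] by (simp add: funpow_Suc_right del: funpow.simps)
qed

lemma length_le_list_encode: "length xs \<le> list_encode xs"
  by (induction xs) (auto intro: le_trans[OF _ le_prod_encode_2])

lemma map_code_eq: "map_code h L = list_encode (map h (list_decode L))"
proof -
  define xs where "xs = list_decode L"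
  have L: "L = list_encode xs" and "length xs \<le> L"
    unfolding xs_def using length_le_list_encode[of "list_decode L"] by simp_all
  then show ?thesis
    unfolding map_code_def rec_nat_funpow
    using map_step_funpow[of xs L h "[]"] map_step_funpow[of "rev (map h xs)" L "\<lambda>z. z" "[]"]
    by (simp add: xs_def)
qed

section \<open>Decoding numbers as formulas\<close>

definition cmp_of_nat :: "nat \<Rightarrow> cmp" where
  "cmp_of_nat c = (if c = 0 then Lt else if c = 1 then Le else if c = 2 then Eq
     else if c = 3 then Ge else Gt)"

definition decode_summand :: "(nat \<Rightarrow> cform) \<Rightarrow> nat \<Rightarrow> int \<times> cterm" where
  "decode_summand sub e = (int_decode (pfst e),
     if pfst (psnd e) = 0 then Cnt (sub (psnd (psnd e))) else Const (int_decode (psnd (psnd e))))"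

definition decode_step :: "(nat \<Rightarrow> cform) \<Rightarrow> (nat \<Rightarrow> cform) \<Rightarrow> nat \<Rightarrow> cform" where
  "decode_step sub atom x =
    (if pfst x = 1 then Dia (sub (psnd x))
     else if pfst x = 2 then Box (sub (psnd x))
     else if pfst x = 3 then Neg (sub (psnd x))
     else if pfst x = 4 then Conj (sub (pfst (psnd x))) (sub (psnd (psnd x)))
     else if pfst x = 5 then Cmp (map (decode_summand sub) (list_decode (pfst (psnd x))))
       (cmp_of_nat (pfst (psnd (psnd x)))) (int_decode (psnd (psnd (psnd x))))
     else atom (psnd x))"

definition subcodes :: "nat \<Rightarrow> nat set" where
  "subcodes x =
    (if pfst x \<in> {1, 2, 3} then {psnd x}
     else if pfst x = 4 then {pfst (psnd x), psnd (psnd x)}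
     else if pfst x = 5 then (\<lambda>e. psnd (psnd e)) ` set (list_decode (pfst (psnd x)))
     else {})"

lemma list_decode_less: "e \<in> set (list_decode L) \<Longrightarrow> e < L"
proof (induction L rule: list_decode.induct)
  case (2 n)
  obtain a b where ab: "prod_decode n = (a, b)" by fastforce
  then have "a \<le> n" "b \<le> n" using pfst_le[of n] psnd_le[of n] by (simp_all add: pfst_def psnd_def)
  then show ?case using 2 ab by auto
qed simp

lemma subcodes_less: "y \<in> subcodes x \<Longrightarrow> y < x"
proof -
  assume y: "y \<in> subcodes x"
  then have "pfst x \<noteq> 0" by (auto simp: subcodes_def split: if_splits)
  then have "psnd x < x" by (rule psnd_less)
  moreover have "psnd (psnd e) \<le> psnd x" if "e \<in> set (list_decode (pfst (psnd x)))" for e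
    using list_decode_less[OF that] psnd_le[of e] psnd_le[of "psnd e"] pfst_le[of "psnd x"]
    by linarith
  then have "y \<le> psnd x"
    using y pfst_le[of "psnd x"] psnd_le[of "psnd x"] by (auto simp: subcodes_def split: if_splits)
  ultimately show ?thesis by simp
qed

lemma decode_step_cong [fundef_cong]:
  "x = x' \<Longrightarrow> (\<And>y. y \<in> subcodes x' \<Longrightarrow> sub y = sub' y) \<Longrightarrow>
     decode_step sub atom x = decode_step sub' atom x'"
  by (auto simp: decode_step_def subcodes_def decode_summand_def intro!: map_cong)

function cform_of_nat :: "nat \<Rightarrow> cform" where
  "cform_of_nat x = decode_step cform_of_nat Sym x"
  by auto
termination by (relation "measure id") (auto dest: subcodes_less)

declare cform_of_nat.simps [simp del]

lemma cmp_of_nat_cmp_code [simp]: "cmp_of_nat (cmp_code c) = c"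
  by (cases c) (simp_all add: cmp_of_nat_def)

lemma cform_of_nat_enc [simp]: "cform_of_nat (enc \<phi>) = \<phi>"
  and "decode_summand cform_of_nat (prod_encode (int_encode a, tenc t)) = (a, t)"
proof (induction \<phi> and t arbitrary: and a)
  case (Cmp ts c k)
  let ?enc_summand = "\<lambda>p. prod_encode (int_encode (fst p), tenc (snd p))"
  have "map (decode_summand cform_of_nat \<circ> ?enc_summand) ts = ts"
  proof (rule map_idI)
    fix p assume "p \<in> set ts"
    moreover obtain a t where "p = (a, t)" by fastforce
    ultimately show "(decode_summand cform_of_nat \<circ> ?enc_summand) p = p"
      using Cmp[of p t a] by simp
  qed
  then show ?case by (simp add: cform_of_nat.simps[of "prod_encode _"] decode_step_def)
qed (simp_all add: cform_of_nat.simps[of "prod_encode _"] decode_step_def decode_summand_def)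

lemma holds_decode_step_cong:
  assumes "1 \<le> j"
    and sub: "\<And>y i. y \<in> subcodes x \<Longrightarrow> i \<in> {1..j} \<Longrightarrow> holds W i (sub y) = holds w i (sub' y)"
    and atom: "holds W j (atom (psnd x)) = holds w j (atom' (psnd x))"
  shows "holds W j (decode_step sub atom x) = holds w j (decode_step sub' atom' x)"
proof -
  have sub_below: "holds W i (sub y) = holds w i (sub' y)"
    if "y \<in> subcodes x" "1 \<le> i" "i \<le> j" for y i
    using sub that by simp
  consider (unary) "pfst x \<in> {1, 2, 3}" | (conj) "pfst x = 4" | (cmp) "pfst x = 5"
    | (letter) "pfst x \<notin> {1, 2, 3, 4, 5}" by auto
  then show ?thesis
  proof cases
    case unary
    then have "psnd x \<in> subcodes x" by (simp add: subcodes_def)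
    with unary show ?thesis using sub_below \<open>1 \<le> j\<close> by (auto simp: decode_step_def)
  next
    case conj
    then have "pfst (psnd x) \<in> subcodes x" "psnd (psnd x) \<in> subcodes x"
      by (simp_all add: subcodes_def)
    with conj show ?thesis using sub_below \<open>1 \<le> j\<close> by (auto simp: decode_step_def)
  next
    case cmp
    have "tval W j (snd (decode_summand sub e)) = tval w j (snd (decode_summand sub' e))"
      if "e \<in> set (list_decode (pfst (psnd x)))" for e
    proof -
      have "psnd (psnd e) \<in> subcodes x" using cmp that by (simp add: subcodes_def)
      then have "{i \<in> {1..j}. holds W i (sub (psnd (psnd e)))} =
          {i \<in> {1..j}. holds w i (sub' (psnd (psnd e)))}"
        using sub_below by auto
      then show ?thesis by (simp add: decode_summand_def)
    qed
    then show ?thesis using cmp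
      by (simp add: decode_step_def decode_summand_def cong: map_cong)
  next
    case letter
    then show ?thesis using atom by (simp add: decode_step_def)
  qed
qed

section \<open>The reduction\<close>

definition FalseF :: cform where "FalseF = Cmp [] Lt 0"
definition TrueF :: cform where "TrueF = Neg FalseF"
definition Disj :: "cform \<Rightarrow> cform \<Rightarrow> cform" where "Disj A B = Neg (Conj (Neg A) (Neg B))"
definition Iff :: "cform \<Rightarrow> cform \<Rightarrow> cform" where
  "Iff A B = Conj (Neg (Conj A (Neg B))) (Neg (Conj B (Neg A)))"

definition disj_letters :: "nat \<Rightarrow> (nat \<Rightarrow> bool) \<Rightarrow> cform" where
  "disj_letters N P = rec_nat FalseF (\<lambda>n F. if P n then Disj (Sym n) F else F) N"

definition conj_below :: "nat \<Rightarrow> (nat \<Rightarrow> cform) \<Rightarrow> cform" where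
  "conj_below m F = rec_nat TrueF (\<lambda>y G. Conj (F y) G) m"

lemma holds_disj_letters: "holds W j (disj_letters N P) \<longleftrightarrow> W ! (j - 1) < N \<and> P (W ! (j - 1))"
  unfolding disj_letters_def by (induction N) (auto simp: FalseF_def Disj_def less_Suc_eq)

lemma holds_conj_below: "holds W j (conj_below m F) \<longleftrightarrow> (\<forall>y<m. holds W j (F y))"
  unfolding conj_below_def by (induction m) (auto simp: TrueF_def FalseF_def less_Suc_eq)

lemma holds_Iff [simp]: "holds W j (Iff A B) \<longleftrightarrow> (holds W j A \<longleftrightarrow> holds W j B)"
  by (auto simp: Iff_def)

lemma dp_disj_letters [simp]: "dp (disj_letters N P) = 0"
  unfolding disj_letters_def by (induction N) (auto simp: FalseF_def Disj_def)

lemma letters_disj_letters: "letters (disj_letters N P) \<subseteq> {..<N}"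
  unfolding disj_letters_def by (induction N) (auto simp: FalseF_def Disj_def)

lemma dp_conj_below: "(\<And>y. dp (F y) \<le> k) \<Longrightarrow> dp (conj_below m F) \<le> k"
  unfolding conj_below_def by (induction m) (auto simp: TrueF_def FalseF_def)

lemma letters_conj_below: "(\<And>y. letters (F y) \<subseteq> A) \<Longrightarrow> letters (conj_below m F) \<subseteq> A"
  unfolding conj_below_def by (induction m) (auto simp: TrueF_def FalseF_def)

lemma fold_max_le: "(\<forall>a\<in>set xs. a \<le> k) \<Longrightarrow> b \<le> (k::nat) \<Longrightarrow> fold max xs b \<le> k"
  by (induction xs arbitrary: b) auto

lemma dp_decode_step:
  assumes "\<And>y. dp (sub y) = 0" "\<And>a. dp (atom a) = 0"
  shows "dp (decode_step sub atom x) \<le> 1"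
proof -
  have "fold max (map (\<lambda>p. tdp (snd p)) (map (decode_summand sub) L)) 0 \<le> 1" for L
    by (rule fold_max_le) (auto simp: decode_summand_def assms)
  then show ?thesis by (simp add: decode_step_def assms)
qed

lemma letters_decode_step:
  assumes "\<And>y. letters (sub y) \<subseteq> A" "\<And>a. letters (atom a) \<subseteq> A"
  shows "letters (decode_step sub atom x) \<subseteq> A"
  using assms by (fastforce simp: decode_step_def decode_summand_def split: if_splits)

text \<open>Over the alphabet \<open>{..<Suc s * 2 ^ m}\<close>, the letter \<open>n\<close> stands for the letter
  \<open>n mod Suc s\<close> of the original string annotated with the set \<open>set_decode (n div Suc s)\<close>
  of those codes \<open>y < m\<close> whose formulas hold at its position; \<open>s\<close> is the code of the
  original alphabet.\<close>

definition code_lit :: "nat \<Rightarrow> nat \<Rightarrow> nat \<Rightarrow> cform" where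
  "code_lit s m y = disj_letters (Suc s * 2 ^ m) (\<lambda>n. y \<in> set_decode (n div Suc s))"

definition letter_lit :: "nat \<Rightarrow> nat \<Rightarrow> nat \<Rightarrow> cform" where
  "letter_lit s m a = disj_letters (Suc s * 2 ^ m) (\<lambda>n. n mod Suc s = a)"

definition valid_lit :: "nat \<Rightarrow> nat \<Rightarrow> cform" where
  "valid_lit s m = disj_letters (Suc s * 2 ^ m) (\<lambda>n. n mod Suc s \<in> set_decode s)"

definition consistent :: "nat \<Rightarrow> nat \<Rightarrow> nat \<Rightarrow> cform" where
  "consistent s m y = Iff (code_lit s m y) (decode_step (code_lit s m) (letter_lit s m) y)"

definition reduct :: "nat \<Rightarrow> nat \<Rightarrow> cform" where
  "reduct s e = Conj (Box (Conj (valid_lit s (Suc e)) (conj_below (Suc e) (consistent s (Suc e)))))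
     (code_lit s (Suc e) e)"

lemma dp_reduct: "dp (reduct s e) \<le> 2"
proof -
  have "dp (consistent s (Suc e) y) \<le> 1" for y
    using dp_decode_step[of "code_lit s (Suc e)" "letter_lit s (Suc e)" y]
    by (simp add: consistent_def Iff_def code_lit_def letter_lit_def)
  then show ?thesis
    using dp_conj_below[of "consistent s (Suc e)" 1]
    by (simp add: reduct_def valid_lit_def code_lit_def)
qed

lemma letters_reduct: "letters (reduct s e) \<subseteq> {..<Suc s * 2 ^ Suc e}"
proof -
  have "letters (consistent s (Suc e) y) \<subseteq> {..<Suc s * 2 ^ Suc e}" for y
    using letters_decode_step[of "code_lit s (Suc e)" _ "letter_lit s (Suc e)" y]
      letters_disj_letters
    by (auto simp: consistent_def Iff_def code_lit_def letter_lit_def)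
  then show ?thesis
    using letters_conj_below[of "consistent s (Suc e)"] letters_disj_letters
    by (auto simp: reduct_def valid_lit_def code_lit_def)
qed

definition exact_annotation :: "nat \<Rightarrow> nat \<Rightarrow> nat list \<Rightarrow> bool" where
  "exact_annotation s m W \<longleftrightarrow> (\<forall>j\<in>{1..length W}. \<forall>y<m.
     holds W j (code_lit s m y) = holds (map (\<lambda>n. n mod Suc s) W) j (cform_of_nat y))"

lemma holds_decode_step_code_lit:
  assumes W: "set W \<subseteq> {..<Suc s * 2 ^ m}" and j: "j \<in> {1..length W}"
    and sub: "\<And>y i. y \<in> subcodes x \<Longrightarrow> i \<in> {1..j} \<Longrightarrow>
      holds W i (code_lit s m y) = holds (map (\<lambda>n. n mod Suc s) W) i (cform_of_nat y)"
  shows "holds W j (decode_step (code_lit s m) (letter_lit s m) x) =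
    holds (map (\<lambda>n. n mod Suc s) W) j (cform_of_nat x)"
proof -
  have "W ! (j - 1) \<in> set W" using j by auto
  then have "holds W j (letter_lit s m a) = holds (map (\<lambda>n. n mod Suc s) W) j (Sym a)" for a
    using W j by (auto simp: letter_lit_def holds_disj_letters)
  then show ?thesis
    using j sub by (subst cform_of_nat.simps) (intro holds_decode_step_cong; simp)
qed

lemma exact_annotation_if_consistent:
  assumes W: "set W \<subseteq> {..<Suc s * 2 ^ m}"
    and consistent: "\<And>j y. j \<in> {1..length W} \<Longrightarrow> y < m \<Longrightarrow> holds W j (consistent s m y)"
  shows "exact_annotation s m W"
proof -
  have "holds W j (code_lit s m y) = holds (map (\<lambda>n. n mod Suc s) W) j (cform_of_nat y)"
    if "y < m" "j \<in> {1..length W}" for y j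
    using that
  proof (induction y arbitrary: j rule: less_induct)
    case (less y)
    have "holds W j (code_lit s m y) = holds W j (decode_step (code_lit s m) (letter_lit s m) y)"
      using consistent[OF less.prems(2,1)] by (simp add: consistent_def)
    also have "\<dots> = holds (map (\<lambda>n. n mod Suc s) W) j (cform_of_nat y)"
      using W less by (intro holds_decode_step_code_lit) (auto dest: subcodes_less)
    finally show ?case .
  qed
  then show ?thesis by (simp add: exact_annotation_def)
qed

lemma consistent_if_exact_annotation:
  assumes W: "set W \<subseteq> {..<Suc s * 2 ^ m}" and exact: "exact_annotation s m W"
    and j: "j \<in> {1..length W}" and "y < m"
  shows "holds W j (consistent s m y)"
proof -
  have "holds W j (decode_step (code_lit s m) (letter_lit s m) y) =
      holds (map (\<lambda>n. n mod Suc s) W) j (cform_of_nat y)"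
    using exact j \<open>y < m\<close> unfolding exact_annotation_def
    by (intro holds_decode_step_code_lit[OF W j]) (auto dest: subcodes_less)
  then show ?thesis using exact j \<open>y < m\<close> by (simp add: exact_annotation_def consistent_def)
qed

lemma less_Suc_if_mem_set_decode: "a \<in> set_decode s \<Longrightarrow> a < Suc s"
proof -
  assume "a \<in> set_decode s"
  then have "s div 2 ^ a \<noteq> 0" using odd_pos by (fastforce simp: set_decode_def)
  then have "2 ^ a \<le> s" by (simp add: div_eq_0_iff)
  then show ?thesis using less_exp[of a] by linarith
qed

lemma set_encode_less: "B \<subseteq> {..<m} \<Longrightarrow> set_encode B < 2 ^ m"
proof -
  assume "B \<subseteq> {..<m}"
  then have "set_encode B \<le> (\<Sum>i<m. 2 ^ i)" unfolding set_encode_def by (intro sum_mono2) auto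
  also have "\<dots> = 2 ^ m - 1" using mask_eq_sum_exp[where 'a = nat, of m] by (simp add: lessThan_def)
  finally show ?thesis by (simp add: le_diff_conv2 Suc_le_eq)
qed

lemma annotated_letter:
  assumes "a < Suc s" "B \<subseteq> {..<m}"
  shows "(a + Suc s * set_encode B) mod Suc s = a"
    and "set_decode ((a + Suc s * set_encode B) div Suc s) = B"
    and "a + Suc s * set_encode B < Suc s * 2 ^ m"
proof -
  have "finite B" using assms(2) finite_subset by blast
  then show "(a + Suc s * set_encode B) mod Suc s = a"
    and "set_decode ((a + Suc s * set_encode B) div Suc s) = B"
    using assms(1) by (simp_all del: mult_Suc)
  have "Suc s * Suc (set_encode B) \<le> Suc s * 2 ^ m"
    using set_encode_less[OF assms(2)] by (intro mult_le_mono2) (simp add: Suc_le_eq)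
  then show "a + Suc s * set_encode B < Suc s * 2 ^ m"
    using assms(1) unfolding mult_Suc_right by linarith
qed

lemma reduct_sound:
  assumes fin: "finite \<Sigma>" and "W \<noteq> []" and W: "set W \<subseteq> {..<Suc (set_encode \<Sigma>) * 2 ^ Suc e}"
    and models: "models W (reduct (set_encode \<Sigma>) e)"
  shows "satisfiable \<Sigma> (cform_of_nat e)"
proof -
  let ?s = "set_encode \<Sigma>"
  let ?w = "map (\<lambda>n. n mod Suc ?s) W"
  have everywhere:
      "holds W j (valid_lit ?s (Suc e)) \<and> (\<forall>y<Suc e. holds W j (consistent ?s (Suc e) y))"
    if "j \<in> {1..length W}" for j
    using models that by (auto simp: models_def reduct_def holds_conj_below)
  have last: "length W \<in> {1..length W}" using \<open>W \<noteq> []\<close> by (simp add: Suc_leI)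
  have "exact_annotation ?s (Suc e) W"
    using everywhere by (intro exact_annotation_if_consistent[OF W]) blast
  then have "holds ?w (length ?w) (cform_of_nat e)"
    using last models by (simp add: exact_annotation_def models_def reduct_def)
  moreover have "set ?w \<subseteq> \<Sigma>"
  proof
    fix a assume "a \<in> set ?w"
    then obtain i where "i < length W" "a = W ! i mod Suc ?s" by (auto simp: in_set_conv_nth)
    then show "a \<in> \<Sigma>"
      using everywhere[of "Suc i"] fin by (auto simp: valid_lit_def holds_disj_letters)
  qed
  ultimately show ?thesis
    using \<open>W \<noteq> []\<close> unfolding satisfiable_def models_def by (intro exI[of _ ?w]) simp
qed

lemma reduct_complete:
  assumes fin: "finite \<Sigma>" and sat: "satisfiable \<Sigma> (cform_of_nat e)"
  shows "satisfiable {..<Suc (set_encode \<Sigma>) * 2 ^ Suc e} (reduct (set_encode \<Sigma>) e)"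
proof -
  obtain w where "w \<noteq> []" "set w \<subseteq> \<Sigma>" and w: "models w (cform_of_nat e)"
    using sat by (auto simp: satisfiable_def)
  let ?s = "set_encode \<Sigma>"
  let ?N = "Suc ?s * 2 ^ Suc e"
  define B where "B j = {y. y < Suc e \<and> holds w j (cform_of_nat y)}" for j
  define W where "W = map (\<lambda>i. w ! i + Suc ?s * set_encode (B (Suc i))) [0..<length w]"
  have len: "length W = length w" by (simp add: W_def)
  have W_nth: "W ! i mod Suc ?s = w ! i" "set_decode (W ! i div Suc ?s) = B (Suc i)"
      "W ! i < ?N" if "i < length w" for i
  proof -
    have "w ! i < Suc ?s"
      using that \<open>set w \<subseteq> \<Sigma>\<close> fin by (intro less_Suc_if_mem_set_decode) (auto simp: subset_iff)
    moreover have "B (Suc i) \<subseteq> {..<Suc e}" by (auto simp: B_def)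
    moreover have "W ! i = w ! i + Suc ?s * set_encode (B (Suc i))" using that by (simp add: W_def)
    ultimately show "W ! i mod Suc ?s = w ! i" "set_decode (W ! i div Suc ?s) = B (Suc i)"
      "W ! i < ?N"
      using annotated_letter[of "w ! i" ?s "B (Suc i)" "Suc e"] by simp_all
  qed
  have proj: "map (\<lambda>n. n mod Suc ?s) W = w"
    by (rule nth_equalityI) (simp_all add: len W_nth)
  have W: "set W \<subseteq> {..<?N}" using W_nth(3) by (auto simp: in_set_conv_nth len)
  have exact: "exact_annotation ?s (Suc e) W"
    using W_nth by (auto simp: exact_annotation_def proj len code_lit_def holds_disj_letters B_def)
  have "holds W j (valid_lit ?s (Suc e))" if "j \<in> {1..length W}" for j
    using that W_nth[of "j - 1"] \<open>set w \<subseteq> \<Sigma>\<close> fin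
    by (auto simp: len valid_lit_def holds_disj_letters)
  moreover have "holds W j (consistent ?s (Suc e) y)" if "j \<in> {1..length W}" "y < Suc e" for j y
    using W exact that by (rule consistent_if_exact_annotation)
  moreover have "holds W (length W) (code_lit ?s (Suc e) e)"
    using exact w \<open>w \<noteq> []\<close> by (simp add: exact_annotation_def proj len models_def Suc_leI)
  ultimately have "models W (reduct ?s e)"
    by (auto simp: models_def reduct_def holds_conj_below)
  then show ?thesis
    using W \<open>w \<noteq> []\<close> len unfolding satisfiable_def by (intro exI[of _ W]) auto
qed

definition reduction :: "nat set \<Rightarrow> cform \<Rightarrow> nat set \<times> cform" where
  "reduction \<Sigma> \<phi> = ({..<Suc (set_encode \<Sigma>) * 2 ^ Suc (enc \<phi>)}, reduct (set_encode \<Sigma>) (enc \<phi>))"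

lemma subset_reduction_alphabet: "finite \<Sigma> \<Longrightarrow> \<Sigma> \<subseteq> {..<Suc (set_encode \<Sigma>) * 2 ^ k}"
proof
  fix a assume "finite \<Sigma>" "a \<in> \<Sigma>"
  then have "a < Suc (set_encode \<Sigma>)" by (intro less_Suc_if_mem_set_decode) simp
  also have "\<dots> \<le> Suc (set_encode \<Sigma>) * 2 ^ k"
    using mult_le_mono2[of 1 "2 ^ k" "Suc (set_encode \<Sigma>)"] by simp
  finally show "a \<in> {..<Suc (set_encode \<Sigma>) * 2 ^ k}" by simp
qed

lemma satisfiable_reduction_iff:
  "finite \<Sigma> \<Longrightarrow> satisfiable \<Sigma> \<phi> \<longleftrightarrow> satisfiable (fst (reduction \<Sigma> \<phi>)) (snd (reduction \<Sigma> \<phi>))"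
  using reduct_complete[of \<Sigma> "enc \<phi>"] reduct_sound[of \<Sigma> _ "enc \<phi>"]
  by (auto simp: reduction_def satisfiable_def)

section \<open>Computability of the reduction\<close>

lemma enc_disj_letters:
  "enc (disj_letters N P) = rec_nat (enc FalseF) (\<lambda>n c. if P n
     then prod_encode (3, prod_encode (4,
       prod_encode (prod_encode (3, prod_encode (0, n)), prod_encode (3, c))))
     else c) N"
  unfolding disj_letters_def by (induction N) (simp_all add: Disj_def)

lemma enc_conj_below:
  "enc (conj_below m F) = rec_nat (enc TrueF) (\<lambda>y c. prod_encode (4, prod_encode (enc (F y), c))) m"
  unfolding conj_below_def by (induction m) simp_all

definition summand_code :: "(nat \<Rightarrow> nat) \<Rightarrow> nat \<Rightarrow> nat" where
  "summand_code sub e = prod_encode (pfst e,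
     if pfst (psnd e) = 0 then prod_encode (0, sub (psnd (psnd e))) else prod_encode (1, psnd (psnd e)))"

definition decode_step_code :: "(nat \<Rightarrow> nat) \<Rightarrow> (nat \<Rightarrow> nat) \<Rightarrow> nat \<Rightarrow> nat" where
  "decode_step_code sub atom x =
    (if pfst x = 1 then prod_encode (1, sub (psnd x))
     else if pfst x = 2 then prod_encode (2, sub (psnd x))
     else if pfst x = 3 then prod_encode (3, sub (psnd x))
     else if pfst x = 4 then prod_encode (4, prod_encode (sub (pfst (psnd x)), sub (psnd (psnd x))))
     else if pfst x = 5 then prod_encode (5, prod_encode (map_code (summand_code sub) (pfst (psnd x)),
       prod_encode (if pfst (psnd (psnd x)) \<le> 4 then pfst (psnd (psnd x)) else 4,
         psnd (psnd (psnd x)))))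
     else atom (psnd x))"

lemma cmp_code_cmp_of_nat: "cmp_code (cmp_of_nat c) = (if c \<le> 4 then c else 4)"
  by (simp add: cmp_of_nat_def)

lemma enc_decode_step:
  "enc (decode_step sub atom x) = decode_step_code (\<lambda>y. enc (sub y)) (\<lambda>a. enc (atom a)) x"
proof -
  have "(\<lambda>p. prod_encode (int_encode (fst p), tenc (snd p))) \<circ> decode_summand sub =
      summand_code (\<lambda>y. enc (sub y))"
    by (simp add: fun_eq_iff decode_summand_def summand_code_def)
  then show ?thesis
    by (simp add: decode_step_def decode_step_code_def map_code_eq cmp_code_cmp_of_nat)
qed

lemma computable_enc_code_lit:
  "computable n s \<Longrightarrow> computable n m \<Longrightarrow> computable n y \<Longrightarrow>
    computable n (\<lambda>xs. enc (code_lit (s xs) (m xs) (y xs)))"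
proof (rule computable_comp3[where h = "\<lambda>s m y. enc (code_lit s m y)"])
  show "computable 3 (\<lambda>ys. enc (code_lit (ys ! 0) (ys ! 1) (ys ! 2)))"
    unfolding code_lit_def enc_disj_letters set_decode_def mem_Collect_eq
    by (intro computable_intros computable_rec_nat; simp)
qed

lemma computable_enc_letter_lit:
  "computable n s \<Longrightarrow> computable n m \<Longrightarrow> computable n a \<Longrightarrow>
    computable n (\<lambda>xs. enc (letter_lit (s xs) (m xs) (a xs)))"
proof (rule computable_comp3[where h = "\<lambda>s m a. enc (letter_lit s m a)"])
  show "computable 3 (\<lambda>ys. enc (letter_lit (ys ! 0) (ys ! 1) (ys ! 2)))"
    unfolding letter_lit_def enc_disj_letters
    by (intro computable_intros computable_rec_nat; simp)
qed

lemma computable_enc_valid_lit: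
  "computable n s \<Longrightarrow> computable n m \<Longrightarrow> computable n (\<lambda>xs. enc (valid_lit (s xs) (m xs)))"
proof (rule computable_comp2[where h = "\<lambda>s m. enc (valid_lit s m)"])
  show "computable 2 (\<lambda>ys. enc (valid_lit (ys ! 0) (ys ! 1)))"
    unfolding valid_lit_def enc_disj_letters set_decode_def mem_Collect_eq
    by (intro computable_intros computable_rec_nat; simp)
qed

lemma computable_map_code_summands:
  "computable n s \<Longrightarrow> computable n m \<Longrightarrow> computable n L \<Longrightarrow>
    computable n (\<lambda>xs. map_code (summand_code (\<lambda>y. enc (code_lit (s xs) (m xs) y))) (L xs))"
proof (rule computable_comp3[where
    h = "\<lambda>s m L. map_code (summand_code (\<lambda>y. enc (code_lit s m y))) L"])
  show "computable 3
      (\<lambda>ys. map_code (summand_code (\<lambda>y. enc (code_lit (ys ! 0) (ys ! 1) y))) (ys ! 2))"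
    unfolding map_code_def map_step_def summand_code_def
    by (intro computable_intros computable_rec_nat computable_enc_code_lit; simp)
qed

lemma computable_enc_consistent:
  "computable n s \<Longrightarrow> computable n m \<Longrightarrow> computable n y \<Longrightarrow>
    computable n (\<lambda>xs. enc (consistent (s xs) (m xs) (y xs)))"
proof (rule computable_comp3[where h = "\<lambda>s m y. enc (consistent s m y)"])
  show "computable 3 (\<lambda>ys. enc (consistent (ys ! 0) (ys ! 1) (ys ! 2)))"
    unfolding consistent_def Iff_def enc.simps enc_decode_step decode_step_code_def
    by (intro computable_intros computable_enc_code_lit computable_enc_letter_lit
        computable_map_code_summands; simp)
qed

lemma computable_enc_reduct:
  "computable n s \<Longrightarrow> computable n e \<Longrightarrow> computable n (\<lambda>xs. enc (reduct (s xs) (e xs)))"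
proof (rule computable_comp2[where h = "\<lambda>s e. enc (reduct s e)"])
  show "computable 2 (\<lambda>ys. enc (reduct (ys ! 0) (ys ! 1)))"
    unfolding reduct_def enc.simps enc_conj_below
    by (intro computable_intros computable_rec_nat computable_enc_code_lit computable_enc_valid_lit
        computable_enc_consistent; simp)
qed

lemma set_encode_lessThan: "set_encode {..<n} = 2 ^ n - 1"
  using mask_eq_sum_exp[where 'a = nat, of n] by (simp add: set_encode_def lessThan_def)

lemma reval_reduction:
  "\<exists>r. \<forall>\<Sigma> \<phi>. reval r [enc_inst \<Sigma> \<phi>] (enc_inst (fst (reduction \<Sigma> \<phi>)) (snd (reduction \<Sigma> \<phi>)))"
proof -
  let ?f = "\<lambda>z. prod_encode (2 ^ (Suc (pfst z) * 2 ^ Suc (psnd z)) - 1,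
    enc (reduct (pfst z) (psnd z)))"
  have "computable 1 (\<lambda>ys. ?f (ys ! 0))"
    by (intro computable_intros computable_enc_reduct; simp)
  then obtain r where r: "\<forall>ys. length ys = 1 \<longrightarrow> reval r ys (?f (ys ! 0))"
    unfolding computable_def by blast
  have "reval r [z] (?f z)" for z using r[rule_format, of "[z]"] by simp
  moreover have "?f (enc_inst \<Sigma> \<phi>) = enc_inst (fst (reduction \<Sigma> \<phi>)) (snd (reduction \<Sigma> \<phi>))"
    for \<Sigma> \<phi>
    by (simp add: enc_inst_def reduction_def set_encode_lessThan)
  ultimately show ?thesis by metis
qed

theorem propositionD1:
  "\<exists>F :: nat set \<Rightarrow> cform \<Rightarrow> nat set \<times> cform.
     (\<exists>r. \<forall>\<Sigma> \<phi>. finite \<Sigma> \<and> letters \<phi> \<subseteq> \<Sigma> \<longrightarrow>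
            reval r [enc_inst \<Sigma> \<phi>] (enc_inst (fst (F \<Sigma> \<phi>)) (snd (F \<Sigma> \<phi>)))) \<and>
     (\<forall>\<Sigma> \<phi>. finite \<Sigma> \<and> letters \<phi> \<subseteq> \<Sigma> \<longrightarrow>
        finite (fst (F \<Sigma> \<phi>)) \<and> \<Sigma> \<subseteq> fst (F \<Sigma> \<phi>) \<and>
        letters (snd (F \<Sigma> \<phi>)) \<subseteq> fst (F \<Sigma> \<phi>) \<and>
        dp (snd (F \<Sigma> \<phi>)) \<le> 2 \<and>
        (satisfiable \<Sigma> \<phi> \<longleftrightarrow> satisfiable (fst (F \<Sigma> \<phi>)) (snd (F \<Sigma> \<phi>))))"
proof (intro exI[of _ reduction] conjI allI impI)
  show "\<exists>r. \<forall>\<Sigma> \<phi>. finite \<Sigma> \<and> letters \<phi> \<subseteq> \<Sigma> \<longrightarrow>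
      reval r [enc_inst \<Sigma> \<phi>] (enc_inst (fst (reduction \<Sigma> \<phi>)) (snd (reduction \<Sigma> \<phi>)))"
    using reval_reduction by blast
next
  fix \<Sigma> \<phi> assume "finite \<Sigma> \<and> letters \<phi> \<subseteq> \<Sigma>"
  then have fin: "finite \<Sigma>" ..
  show "finite (fst (reduction \<Sigma> \<phi>))" "\<Sigma> \<subseteq> fst (reduction \<Sigma> \<phi>)"
    "letters (snd (reduction \<Sigma> \<phi>)) \<subseteq> fst (reduction \<Sigma> \<phi>)" "dp (snd (reduction \<Sigma> \<phi>)) \<le> 2"
    using subset_reduction_alphabet[OF fin, of "Suc (enc \<phi>)"] letters_reduct dp_reduct
    by (simp_all add: reduction_def)
  show "satisfiable \<Sigma> \<phi> \<longleftrightarrow> satisfiable (fst (reduction \<Sigma> \<phi>)) (snd (reduction \<Sigma> \<phi>))"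
    using fin by (rule satisfiable_reduction_iff)
qed

end
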